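(* For all integers $m\ge 2$, $r\ge 2$ and $i\in\{1,\ldots,r\}$ we have $\mu(mi,r)\mid \alpha_{m,r}(i)$. In particular, $\mu(m,r)\mid\alpha_{m,r}(i)$ for all $i\in\{1,\ldots,r\}$.
   Context: For positive integers $a,b$, $\mu(a,b):=\dfrac{a}{\gcd(a,b)}$. For integers $m\ge2$, $r\ge1$, the numbers $\alpha_{m,r}(1),\ldots,\alpha_{m,r}(r)$ are the unique integers such that $\binom{mn+r-1}{r}=\sum_{i=1}^{r}\alpha_{m,r}(i)\binom{n+i-1}{i}$ for all positive integers $n$. *)

theory Defs
  imports Main
begin

definition mu :: "nat \<Rightarrow> nat \<Rightarrow> nat" where
  "mu a b = a div gcd a b"

definition alpha :: "nat \<Rightarrow> nat \<Rightarrow> nat \<Rightarrow> int" where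
  "alpha m r = (THE a :: nat \<Rightarrow> int.
      (\<forall>i. (i < 1 \<or> r < i) \<longrightarrow> a i = 0) \<and>
      (\<forall>n::nat. 0 < n \<longrightarrow>
         int ((m * n + r - 1) choose r) = (\<Sum>i=1..r. a i * int ((n + i - 1) choose i))))"

end

theory Submission
  imports Defs "HOL-Computational_Algebra.Formal_Power_Series"
begin

(* The series (1 - X)^-k has coefficients C(k + i - 1, i).  Substituting s = 1 - (1 - X)^m,
   which has no constant term, into (1 - X)^-n gives (1 - X)^-(m n); comparing coefficients of
   X^r shows alpha(i) = [X^r] s^i, because the C(n + i - 1, i) are linearly independent as
   functions of n.  Differentiating, r [X^r] s^i = [X^(r-1)] (s^i)' and
   (s^i)' = m i (1 - X)^(m-1) s^(i-1), so m i divides r alpha(i), hence mu(m i, r) divides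
   alpha(i). *)

definition fps_neg_binomial :: "nat \<Rightarrow> 'a::comm_ring_1 fps" where
  "fps_neg_binomial k = Abs_fps (\<lambda>i. of_nat ((k + i - 1) choose i))"

lemma fps_neg_binomial_0 [simp]: "fps_neg_binomial 0 = 1"
  by (auto simp: fps_neg_binomial_def fps_eq_iff binomial_eq_0)

lemma fps_neg_binomial_Suc_times_one_minus_X:
  "fps_neg_binomial (Suc k) * (1 - fps_X) = fps_neg_binomial k"
proof (rule fps_ext)
  fix n
  show "fps_nth (fps_neg_binomial (Suc k) * (1 - fps_X)) n = fps_nth (fps_neg_binomial k) n"
  proof (cases n)
    case (Suc j)
    have "(k + Suc j) choose Suc j = ((k + j) choose Suc j) + ((k + j) choose j)"
      by simp
    then show ?thesis
      using Suc by (simp add: fps_neg_binomial_def algebra_simps)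
  qed (simp add: fps_neg_binomial_def algebra_simps)
qed

lemma fps_neg_binomial_times_power:
  "fps_neg_binomial k * (1 - fps_X) ^ k = 1"
proof (induction k)
  case (Suc k)
  then show ?case
    by (metis fps_neg_binomial_Suc_times_one_minus_X mult.assoc power_Suc)
qed simp

definition compl_power :: "nat \<Rightarrow> 'a::comm_ring_1 fps" where
  "compl_power m = 1 - (1 - fps_X) ^ m"

lemma compl_power_nth_0 [simp]: "fps_nth (compl_power m) 0 = 0"
  by (simp add: compl_power_def fps_power_zeroth)

lemma fps_neg_binomial_compose_compl_power:
  "(fps_neg_binomial n oo compl_power m :: 'a::idom fps) = fps_neg_binomial (m * n)"
proof -
  \<comment> \<open>Both sides are inverses of \<open>(1 - X)^(m n)\<close>.\<close>
  have "(1 - fps_X) oo compl_power m = ((1 - fps_X) ^ m :: 'a fps)"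
    by (simp add: fps_compose_sub_distrib) (simp add: compl_power_def)
  then have "((1 - fps_X) ^ n oo compl_power m :: 'a fps) = (1 - fps_X) ^ (m * n)"
    by (simp flip: fps_compose_power[OF compl_power_nth_0] add: power_mult)
  then have "(fps_neg_binomial n oo compl_power m) * (1 - fps_X) ^ (m * n)
      = (fps_neg_binomial n * (1 - fps_X) ^ n :: 'a fps) oo compl_power m"
    by (simp add: fps_compose_mult_distrib[OF compl_power_nth_0])
  also have "\<dots> = 1"
    by (simp add: fps_neg_binomial_times_power)
  also have "\<dots> = fps_neg_binomial (m * n) * (1 - fps_X) ^ (m * n)"
    by (simp add: fps_neg_binomial_times_power)
  finally have "(fps_neg_binomial n oo compl_power m :: 'a fps) * (1 - fps_X) ^ (m * n)
      = fps_neg_binomial (m * n) * (1 - fps_X) ^ (m * n)" .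
  moreover have "(1 - fps_X) ^ (m * n) \<noteq> (0 :: 'a fps)"
    by (metis fps_neg_binomial_times_power mult_zero_right zero_neq_one)
  ultimately show ?thesis
    by simp
qed

lemma choose_expansion_compl_power:
  assumes "r \<ge> 1"
  shows "(of_nat ((m * n + r - 1) choose r) :: 'a::idom)
    = (\<Sum>i=1..r. of_nat ((n + i - 1) choose i) * fps_nth (compl_power m ^ i) r)"
proof -
  have "(of_nat ((m * n + r - 1) choose r) :: 'a)
      = fps_nth (fps_neg_binomial n oo compl_power m) r"
    unfolding fps_neg_binomial_compose_compl_power by (simp add: fps_neg_binomial_def)
  also have "\<dots>
      = (\<Sum>i=0..r. of_nat ((n + i - 1) choose i) * fps_nth (compl_power m ^ i) r)"
    by (simp add: fps_compose_nth fps_neg_binomial_def)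
  also have "\<dots>
      = (\<Sum>i=1..r. of_nat ((n + i - 1) choose i) * fps_nth (compl_power m ^ i) r)"
    using assms by (simp add: sum.atLeast_Suc_atMost)
  finally show ?thesis .
qed

lemma binomial_sums_eventually_zero_imp_zero:
  fixes d :: "nat \<Rightarrow> 'a::comm_ring_1"
  assumes "\<forall>n\<ge>N. (\<Sum>i\<le>r. d i * of_nat ((n + i) choose i)) = 0"
  shows "\<forall>i\<le>r. d i = 0"
  using assms
proof (induction r arbitrary: d N)
  case (Suc r)
  define S where "S n = (\<Sum>i\<le>Suc r. d i * of_nat ((n + i) choose i))" for n
  have S_eq: "S n = d 0 + (\<Sum>k\<le>r. d (Suc k) * of_nat ((n + Suc k) choose Suc k))" for n
    unfolding S_def sum.atMost_Suc_shift by simp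
  \<comment> \<open>By Pascal's rule the difference in \<open>n\<close> shifts the coefficients down by one.\<close>
  have S_diff: "S (Suc n) - S n = (\<Sum>k\<le>r. d (Suc k) * of_nat ((Suc n + k) choose k))" for n
    unfolding S_eq by (simp add: sum_subtractf[symmetric] right_diff_distrib[symmetric])
  have S_zero: "S n = 0" if "N \<le> n" for n
    using Suc.prems that unfolding S_def by blast
  have "\<forall>n\<ge>Suc N. (\<Sum>k\<le>r. d (Suc k) * of_nat ((n + k) choose k)) = 0"
  proof (intro allI impI)
    fix n assume "Suc N \<le> n"
    then obtain n' where "n = Suc n'" "N \<le> n'"
      by (cases n) auto
    then show "(\<Sum>k\<le>r. d (Suc k) * of_nat ((n + k) choose k)) = 0"
      using S_diff[of n'] S_zero[of n'] S_zero[of "Suc n'"] by simp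
  qed
  then have tail: "\<forall>k\<le>r. d (Suc k) = 0"
    by (rule Suc.IH)
  then have "S N = d 0"
    by (simp add: S_eq)
  with S_zero have "d 0 = 0"
    by simp
  with tail show ?case
    by (metis Suc_le_mono not0_implies_Suc)
qed auto

lemma binomial_expansion_unique:
  fixes a b :: "nat \<Rightarrow> 'a::comm_ring_1"
  assumes outside: "\<forall>i. i \<notin> {1..r} \<longrightarrow> a i = b i"
    and expansion: "\<forall>n>0. (\<Sum>i=1..r. a i * of_nat ((n + i - 1) choose i))
                       = (\<Sum>i=1..r. b i * of_nat ((n + i - 1) choose i))"
  shows "a = b"
proof -
  have "(\<Sum>i\<le>r. (a i - b i) * of_nat ((n + i) choose i)) = 0" for n
  proof -
    have "(\<Sum>i\<le>r. (a i - b i) * of_nat ((n + i) choose i))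
        = (\<Sum>i=1..r. (a i - b i) * of_nat ((Suc n + i - 1) choose i))"
      using outside by (cases "r = 0") (simp_all add: atMost_atLeast0 sum.atLeast_Suc_atMost)
    also have "\<dots> = (\<Sum>i=1..r. a i * of_nat ((Suc n + i - 1) choose i))
        - (\<Sum>i=1..r. b i * of_nat ((Suc n + i - 1) choose i))"
      by (simp add: sum_subtractf left_diff_distrib)
    also have "\<dots> = 0"
      using expansion[rule_format, of "Suc n"] by simp
    finally show ?thesis .
  qed
  then have "\<forall>i\<le>r. a i - b i = 0"
    by (intro binomial_sums_eventually_zero_imp_zero[of 0]) simp
  with outside show "a = b"
    by (metis atLeastAtMost_iff eq_iff_diff_eq_0 ext)
qed

lemma alpha_eq_nth_compl_power:
  assumes "i \<in> {1..r}"
  shows "alpha m r i = fps_nth (compl_power m ^ i) r"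
proof -
  define c :: "nat \<Rightarrow> int"
    where "c i = (if i \<in> {1..r} then fps_nth (compl_power m ^ i) r else 0)" for i
  have r: "r \<ge> 1"
    using assms by simp
  have c_expansion:
    "int ((m * n + r - 1) choose r) = (\<Sum>i=1..r. c i * int ((n + i - 1) choose i))" for n
    unfolding choose_expansion_compl_power[OF r] by (intro sum.cong) (auto simp: c_def)
  have "alpha m r = c"
    unfolding alpha_def
  proof (rule the_equality)
    fix a :: "nat \<Rightarrow> int"
    assume a: "(\<forall>i. (i < 1 \<or> r < i) \<longrightarrow> a i = 0) \<and>
      (\<forall>n. 0 < n \<longrightarrow>
         int ((m * n + r - 1) choose r) = (\<Sum>i=1..r. a i * int ((n + i - 1) choose i)))"
    show "a = c"
    proof (rule binomial_expansion_unique)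
      show "\<forall>i. i \<notin> {1..r} \<longrightarrow> a i = c i"
        using a by (auto simp: c_def not_less_eq_eq)
      show "\<forall>n>0. (\<Sum>i=1..r. a i * int ((n + i - 1) choose i))
                 = (\<Sum>i=1..r. c i * int ((n + i - 1) choose i))"
      proof (intro allI impI)
        fix n :: nat
        assume "0 < n"
        with a have
          "int ((m * n + r - 1) choose r) = (\<Sum>i=1..r. a i * int ((n + i - 1) choose i))"
          by blast
        then show "(\<Sum>i=1..r. a i * int ((n + i - 1) choose i))
                 = (\<Sum>i=1..r. c i * int ((n + i - 1) choose i))"
          by (simp only: c_expansion)
      qed
    qed
  qed (use c_expansion in \<open>auto simp: c_def\<close>)
  with assms show ?thesis
    by (simp add: c_def)
qed

lemma of_nat_mult_dvd_nth_compl_power_power: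
  assumes "r \<ge> 1"
  shows "(of_nat (m * i) :: 'a::comm_ring_1) dvd of_nat r * fps_nth (compl_power m ^ i) r"
proof -
  have "fps_deriv (compl_power m ^ i :: 'a fps)
      = fps_const (of_nat (m * i)) * ((1 - fps_X) ^ (m - 1) * compl_power m ^ (i - 1))"
    by (simp add: compl_power_def fps_deriv_power fps_of_nat algebra_simps
        flip: fps_const_mult)
  moreover have "of_nat r * fps_nth (compl_power m ^ i) r
      = fps_nth (fps_deriv (compl_power m ^ i :: 'a fps)) (r - 1)"
    using assms by simp
  ultimately show ?thesis
    by simp
qed

lemma div_gcd_dvd_if_dvd_mult:
  fixes a b x :: "'a::semiring_gcd"
  assumes "a dvd b * x" and "a \<noteq> 0"
  shows "a div gcd a b dvd x"
proof -
  define g where "g = gcd a b"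
  have "g \<noteq> 0"
    using assms(2) by (simp add: g_def)
  have "g * (a div g) dvd g * (b div g * x)"
    using assms(1) by (simp add: g_def mult.assoc[symmetric])
  with \<open>g \<noteq> 0\<close> have "a div g dvd b div g * x"
    by simp
  moreover have "coprime (a div g) (b div g)"
    using assms(2) div_gcd_coprime g_def by blast
  ultimately show ?thesis
    by (simp add: g_def coprime_dvd_mult_right_iff)
qed

theorem lemma2p6:
  fixes m r :: nat
  assumes "m \<ge> 2" and "r \<ge> 2"
  shows "\<forall>i\<in>{1..r}. int (mu (m * i) r) dvd alpha m r i \<and> int (mu m r) dvd alpha m r i"
proof
  fix i assume i: "i \<in> {1..r}"
  have mi_dvd: "int (m * i) dvd int r * alpha m r i"
    using i of_nat_mult_dvd_nth_compl_power_power[of r m i]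
    by (simp add: alpha_eq_nth_compl_power)
  then have m_dvd: "int m dvd int r * alpha m r i"
    by (simp add: dvd_mult_left)
  have "int (m * i) \<noteq> 0" "int m \<noteq> 0"
    using assms i by auto
  moreover have "int (mu a b) = int a div gcd (int a) (int b)" for a b
    by (simp add: mu_def zdiv_int)
  ultimately show "int (mu (m * i) r) dvd alpha m r i \<and> int (mu m r) dvd alpha m r i"
    using mi_dvd m_dvd div_gcd_dvd_if_dvd_mult by metis
qed

end
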